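(* There exist finite category presentations $C,D,E$ and finite uncurried profunctor presentations $P:C\nrightarrow D$ and $Q:D\nrightarrow E$ such that the composite profunctor $[\![P]\!]\odot[\![Q]\!]:[\![C]\!]\nrightarrow[\![E]\!]$ is not finitely uncurried presentable. In particular, the class of finitely uncurried presentable profunctors is not closed under composition.
   Context: Category presentation $C$: sorts, function symbols $f:c\to c'$, and a set $C_E$ of equations between parallel paths (paths are composable finite lists of function symbols, possibly empty); finite if all these sets are finite. $\approx_C$ is the smallest equivalence relation on paths containing $C_E$ and closed under concatenation with composable function symbols on either side; $[\![C]\!]$ has sorts as objects and $\approx_C$-classes of paths as morphisms. A profunctor $\mathcal P:\mathcal C\nrightarrow\mathcal D$ is a category with a functor to $\mathbf 2=\{0\to1\}$ with fibres $\mathcal C$ over $0$ and $\mathcal D$ over $1$; $\mathcal P(c,d)$ is the set of morphisms $c\to d$ lying over $0\to 1$ (cross-morphisms), making $\mathcal P$ a functor $\mathcal C^{op}\times\mathcal D\to\mathbf{Set}$. Morphisms of profunctors $\mathcal C\nrightarrow\mathcal D$ are functors over $\mathbf 2$ that are the identity on $\mathcal C$ and $\mathcal D$. Composition: for $\mathcal P:\mathcal C\nrightarrow\mathcal D$, $\mathcal Q:\mathcal D\nrightarrow\mathcal E$, $(\mathcal P\odot\mathcal Q)(c,e)=\int^{d\in\mathcal D}\mathcal P(c,d)\times\mathcal Q(d,e)$, i.e. $\coprod_d\mathcal P(c,d)\times\mathcal Q(d,e)$ modulo the equivalence relation generated by $(p,\mathcal Q(g,1)(q'))\sim(\mathcal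 P(1,g)(p),q')$ for $g:d\to d'$ in $\mathcal D$. An uncurried profunctor presentation $P:C\nrightarrow D$ consists of a set $\mathrm{Fun}(P)$ of symbols $x:c\to d$ ($c$ a sort of $C$, $d$ a sort of $D$) and a set $P_E$ of equations between cross-paths, i.e. paths from a sort of $C$ to a sort of $D$ in the category presentation $|P|$ whose sorts are $\mathrm{Sort}(C)+\mathrm{Sort}(D)$, function symbols $\mathrm{Fun}(C)+\mathrm{Fun}(P)+\mathrm{Fun}(D)$ and equations $C_E+P_E+D_E$. It is finite if $C$, $D$, $\mathrm{Fun}(P)$, $P_E$ are finite. Its semantics $[\![P]\!]:[\![C]\!]\nrightarrow[\![D]\!]$ is $[\![|P|]\!]$ with sorts of $C$ over $0$ and sorts of $D$ over $1$. A profunctor $\mathcal P:[\![C]\!]\nrightarrow[\![D]\!]$ is finitely uncurried presentable if there is a finite uncurried presentation $P:C\nrightarrow D$ with $\mathcal P\cong[\![P]\!]$ in $\mathbf{Prof}([\![C]\!],[\![D]\!])$. *)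

theory Defs
  imports Main
begin

text \<open>A path is a triple (source sort, list of function symbols, target sort);
  the list is read left to right in diagrammatic order, so [f1,...,fn] means
  first f1, then f2, etc.  The empty list with source = target a is the identity at a.\<close>

type_synonym ('s,'f) path = "'s \<times> 'f list \<times> 's"

record ('s,'f) catpres =
  Sorts :: "'s set"
  Funs  :: "'f set"
  Dom   :: "'f \<Rightarrow> 's"
  Cod   :: "'f \<Rightarrow> 's"
  Eqs   :: "(('s,'f) path \<times> ('s,'f) path) set"

definition psrc :: "('s,'f) path \<Rightarrow> 's" where "psrc p = fst p"
definition ptgt :: "('s,'f) path \<Rightarrow> 's" where "ptgt p = snd (snd p)"

definition pcomp :: "('s,'f) path \<Rightarrow> ('s,'f) path \<Rightarrow> ('s,'f) path" where
  "pcomp p q = (psrc p, fst (snd p) @ fst (snd q), ptgt q)"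

fun is_chain :: "('s,'f,'z) catpres_scheme \<Rightarrow> 's \<Rightarrow> 'f list \<Rightarrow> 's \<Rightarrow> bool" where
  "is_chain C a [] b = (a = b)"
| "is_chain C a (f # fs) b = (f \<in> Funs C \<and> Dom C f = a \<and> is_chain C (Cod C f) fs b)"

definition is_path :: "('s,'f,'z) catpres_scheme \<Rightarrow> ('s,'f) path \<Rightarrow> bool" where
  "is_path C p = (psrc p \<in> Sorts C \<and> ptgt p \<in> Sorts C \<and> is_chain C (psrc p) (fst (snd p)) (ptgt p))"

definition wf_catpres :: "('s,'f) catpres \<Rightarrow> bool" where
  "wf_catpres C =
    ((\<forall>f\<in>Funs C. Dom C f \<in> Sorts C \<and> Cod C f \<in> Sorts C) \<and>
     (\<forall>(p,q)\<in>Eqs C. is_path C p \<and> is_path C q \<and> psrc p = psrc q \<and> ptgt p = ptgt q))"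

definition finite_catpres :: "('s,'f) catpres \<Rightarrow> bool" where
  "finite_catpres C = (finite (Sorts C) \<and> finite (Funs C) \<and> finite (Eqs C))"

inductive peq :: "('s,'f) catpres \<Rightarrow> ('s,'f) path \<Rightarrow> ('s,'f) path \<Rightarrow> bool" for C where
  peq_eq: "(p, q) \<in> Eqs C \<Longrightarrow> peq C p q"
| peq_refl: "is_path C p \<Longrightarrow> peq C p p"
| peq_sym: "peq C p q \<Longrightarrow> peq C q p"
| peq_trans: "peq C p q \<Longrightarrow> peq C q r \<Longrightarrow> peq C p r"
| peq_left: "peq C (a, fs, b) (a', gs, b') \<Longrightarrow> f \<in> Funs C \<Longrightarrow> Cod C f = a \<Longrightarrow>
     peq C (Dom C f, f # fs, b) (Dom C f, f # gs, b')"
| peq_right: "peq C (a, fs, b) (a', gs, b') \<Longrightarrow> f \<in> Funs C \<Longrightarrow> Dom C f = b \<Longrightarrow>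
     peq C (a, fs @ [f], Cod C f) (a', gs @ [f], Cod C f)"

text \<open>Morphisms of \<open>[[C]]\<close> are \<open>\<approx>_C\<close>-classes of paths.\<close>

definition pclass :: "('s,'f) catpres \<Rightarrow> ('s,'f) path \<Rightarrow> ('s,'f) path set" where
  "pclass C p = {q. peq C p q}"

record ('s,'f) profpres =
  PFuns :: "'f set"
  PDom  :: "'f \<Rightarrow> 's"
  PCod  :: "'f \<Rightarrow> 's"
  PEqs  :: "(('s + 's, 'f + 'f + 'f) path \<times> ('s + 's, 'f + 'f + 'f) path) set"

definition embL :: "('s,'f) path \<Rightarrow> ('s + 's, 'f + 'f + 'f) path" where
  "embL p = (Inl (psrc p), map Inl (fst (snd p)), Inl (ptgt p))"

definition embR :: "('s,'f) path \<Rightarrow> ('s + 's, 'f + 'f + 'f) path" where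
  "embR p = (Inr (psrc p), map (Inr \<circ> Inr) (fst (snd p)), Inr (ptgt p))"

definition collage :: "('s,'f) catpres \<Rightarrow> ('s,'f) catpres \<Rightarrow> ('s,'f) profpres
     \<Rightarrow> ('s + 's, 'f + 'f + 'f) catpres" where
  "collage C D P =
    \<lparr> Sorts = Inl ` Sorts C \<union> Inr ` Sorts D,
      Funs = Inl ` Funs C \<union> (Inr \<circ> Inl) ` PFuns P \<union> (Inr \<circ> Inr) ` Funs D,
      Dom = case_sum (\<lambda>f. Inl (Dom C f)) (case_sum (\<lambda>x. Inl (PDom P x)) (\<lambda>g. Inr (Dom D g))),
      Cod = case_sum (\<lambda>f. Inl (Cod C f)) (case_sum (\<lambda>x. Inr (PCod P x)) (\<lambda>g. Inr (Cod D g))),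
      Eqs = (\<lambda>(p,q). (embL p, embL q)) ` Eqs C \<union> PEqs P \<union> (\<lambda>(p,q). (embR p, embR q)) ` Eqs D \<rparr>"

definition wf_profpres :: "('s,'f) catpres \<Rightarrow> ('s,'f) catpres \<Rightarrow> ('s,'f) profpres \<Rightarrow> bool" where
  "wf_profpres C D P =
    (wf_catpres C \<and> wf_catpres D \<and>
     (\<forall>x\<in>PFuns P. PDom P x \<in> Sorts C \<and> PCod P x \<in> Sorts D) \<and>
     (\<forall>(p,q)\<in>PEqs P. is_path (collage C D P) p \<and> is_path (collage C D P) q \<and>
        psrc p = psrc q \<and> ptgt p = ptgt q \<and>
        psrc p \<in> Inl ` Sorts C \<and> ptgt p \<in> Inr ` Sorts D))"

definition finite_profpres :: "('s,'f) catpres \<Rightarrow> ('s,'f) catpres \<Rightarrow> ('s,'f) profpres \<Rightarrow> bool" where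
  "finite_profpres C D P =
    (finite_catpres C \<and> finite_catpres D \<and> finite (PFuns P) \<and> finite (PEqs P))"

text \<open>Cross-morphisms \<open>[[P]](c,d)\<close>: classes of cross-paths from \<open>c\<close> to \<open>d\<close> in \<open>|P|\<close>.\<close>

definition sem_hom :: "('s,'f) catpres \<Rightarrow> ('s,'f) catpres \<Rightarrow> ('s,'f) profpres \<Rightarrow> 's \<Rightarrow> 's
     \<Rightarrow> ('s + 's, 'f + 'f + 'f) path set set" where
  "sem_hom C D P c d = pclass (collage C D P) `
     {p. is_path (collage C D P) p \<and> psrc p = Inl c \<and> ptgt p = Inr d}"

definition sem_lact :: "('s,'f) catpres \<Rightarrow> ('s,'f) catpres \<Rightarrow> ('s,'f) profpres
     \<Rightarrow> ('s,'f) path \<Rightarrow> ('s + 's, 'f + 'f + 'f) path set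
     \<Rightarrow> ('s + 's, 'f + 'f + 'f) path set" where
  "sem_lact C D P u X = (\<Union>p\<in>X. pclass (collage C D P) (pcomp (embL u) p))"

definition sem_ract :: "('s,'f) catpres \<Rightarrow> ('s,'f) catpres \<Rightarrow> ('s,'f) profpres
     \<Rightarrow> ('s,'f) path \<Rightarrow> ('s + 's, 'f + 'f + 'f) path set
     \<Rightarrow> ('s + 's, 'f + 'f + 'f) path set" where
  "sem_ract C D P v X = (\<Union>p\<in>X. pclass (collage C D P) (pcomp p (embR v)))"

type_synonym ('s,'f) celem = "('s + 's, 'f + 'f + 'f) path set"

definition comp_carrier :: "('s,'f) catpres \<Rightarrow> ('s,'f) catpres \<Rightarrow> ('s,'f) catpres
     \<Rightarrow> ('s,'f) profpres \<Rightarrow> ('s,'f) profpres \<Rightarrow> 's \<Rightarrow> 's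
     \<Rightarrow> (('s,'f) celem \<times> ('s,'f) celem) set" where
  "comp_carrier C D E P Q c e =
     {(X, Y). \<exists>d\<in>Sorts D. X \<in> sem_hom C D P c d \<and> Y \<in> sem_hom D E Q d e}"

text \<open>Generating relation of the coend: \<open>(p, Q(g,1) q') ~ (P(1,g) p, q')\<close> for \<open>g : d \<rightarrow> d'\<close> in D.\<close>

definition comp_gen :: "('s,'f) catpres \<Rightarrow> ('s,'f) catpres \<Rightarrow> ('s,'f) catpres
     \<Rightarrow> ('s,'f) profpres \<Rightarrow> ('s,'f) profpres
     \<Rightarrow> ((('s,'f) celem \<times> ('s,'f) celem) \<times> (('s,'f) celem \<times> ('s,'f) celem)) set" where
  "comp_gen C D E P Q =
     {((X, sem_lact D E Q g Y'), (sem_ract C D P g X, Y')) | X Y' g c e.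
        c \<in> Sorts C \<and> e \<in> Sorts E \<and> is_path D g \<and>
        X \<in> sem_hom C D P c (psrc g) \<and> Y' \<in> sem_hom D E Q (ptgt g) e}"

definition comp_all :: "('s,'f) catpres \<Rightarrow> ('s,'f) catpres \<Rightarrow> ('s,'f) catpres
     \<Rightarrow> ('s,'f) profpres \<Rightarrow> ('s,'f) profpres \<Rightarrow> (('s,'f) celem \<times> ('s,'f) celem) set" where
  "comp_all C D E P Q = (\<Union>c\<in>Sorts C. \<Union>e\<in>Sorts E. comp_carrier C D E P Q c e)"

definition comp_eq :: "('s,'f) catpres \<Rightarrow> ('s,'f) catpres \<Rightarrow> ('s,'f) catpres
     \<Rightarrow> ('s,'f) profpres \<Rightarrow> ('s,'f) profpres
     \<Rightarrow> ((('s,'f) celem \<times> ('s,'f) celem) \<times> (('s,'f) celem \<times> ('s,'f) celem)) set" where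
  "comp_eq C D E P Q =
     Id_on (comp_all C D E P Q) \<union> (comp_gen C D E P Q \<union> (comp_gen C D E P Q)\<inverse>)\<^sup>+"

definition comp_hom :: "('s,'f) catpres \<Rightarrow> ('s,'f) catpres \<Rightarrow> ('s,'f) catpres
     \<Rightarrow> ('s,'f) profpres \<Rightarrow> ('s,'f) profpres \<Rightarrow> 's \<Rightarrow> 's
     \<Rightarrow> (('s,'f) celem \<times> ('s,'f) celem) set set" where
  "comp_hom C D E P Q c e = (\<lambda>z. comp_eq C D E P Q `` {z}) ` comp_carrier C D E P Q c e"

definition comp_act :: "('s,'f) catpres \<Rightarrow> ('s,'f) catpres \<Rightarrow> ('s,'f) catpres
     \<Rightarrow> ('s,'f) profpres \<Rightarrow> ('s,'f) profpres \<Rightarrow> ('s,'f) path \<Rightarrow> ('s,'f) path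
     \<Rightarrow> (('s,'f) celem \<times> ('s,'f) celem) set \<Rightarrow> (('s,'f) celem \<times> ('s,'f) celem) set" where
  "comp_act C D E P Q u v Z =
     (\<Union>(X, Y)\<in>Z. comp_eq C D E P Q `` {(sem_lact C D P u X, sem_ract D E Q v Y)})"

text \<open>A profunctor \<open>[[C]] \<nrightarrow> [[E]]\<close> is given here by its sets of cross-morphisms
  \<open>F c e\<close> together with the action \<open>act u v x\<close> of C-paths \<open>u\<close> (on the left) and
  E-paths \<open>v\<close> (on the right).  An isomorphism in \<open>Prof([[C]],[[E]])\<close> to \<open>[[R]]\<close> is a
  functor over 2 that is the identity on \<open>[[C]]\<close> and \<open>[[E]]\<close> and has an inverse, i.e.
  a family of bijections on cross-morphisms compatible with composition with
  morphisms of \<open>[[C]]\<close> and \<open>[[E]]\<close>.\<close>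

definition prof_iso_sem :: "('s,'f) catpres \<Rightarrow> ('s,'f) catpres
     \<Rightarrow> ('s \<Rightarrow> 's \<Rightarrow> 'x set) \<Rightarrow> (('s,'f) path \<Rightarrow> ('s,'f) path \<Rightarrow> 'x \<Rightarrow> 'x)
     \<Rightarrow> ('s,'f) profpres \<Rightarrow> bool" where
  "prof_iso_sem C E F act R =
     (\<exists>\<phi>. (\<forall>c\<in>Sorts C. \<forall>e\<in>Sorts E. bij_betw \<phi> (F c e) (sem_hom C E R c e)) \<and>
          (\<forall>u v x. is_path C u \<longrightarrow> is_path E v \<longrightarrow> x \<in> F (ptgt u) (psrc v) \<longrightarrow>
              \<phi> (act u v x) = sem_lact C E R u (sem_ract C E R v (\<phi> x))))"

definition fin_unc_presentable :: "('s,'f) catpres \<Rightarrow> ('s,'f) catpres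
     \<Rightarrow> ('s \<Rightarrow> 's \<Rightarrow> 'x set) \<Rightarrow> (('s,'f) path \<Rightarrow> ('s,'f) path \<Rightarrow> 'x \<Rightarrow> 'x) \<Rightarrow> bool" where
  "fin_unc_presentable C E F act =
     (\<exists>R :: ('s,'f) profpres. wf_profpres C E R \<and> finite_profpres C E R \<and> prof_iso_sem C E F act R)"

end

theory Submission imports Defs begin

text \<open>Take \<open>C = E\<close> the one-object category without arrows, \<open>D\<close> the free monoid on one
  loop \<open>g\<close>, and let \<open>P\<close>, \<open>Q\<close> each consist of one generator \<open>x\<close>, \<open>y\<close>. Since nothing is
  imposed by equations, the coend relation only slides powers of \<open>g\<close> between the two
  factors and so preserves the total length of the representing paths; hence the pairs
  \<open>(x, g\<^sup>n y)\<close> give infinitely many elements of the composite. On the other hand,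
  a cross-path of a presentation between categories without arrows is a single
  generator, so every finitely presented such profunctor has finite hom-sets.\<close>

definition plen :: "('s,'f) path \<Rightarrow> nat" where
  "plen p = length (fst (snd p))"

definition funs_typed :: "('s,'f,'z) catpres_scheme \<Rightarrow> bool" where
  "funs_typed K = (\<forall>f\<in>Funs K. Dom K f \<in> Sorts K \<and> Cod K f \<in> Sorts K)"

lemma is_chain_append:
  "is_chain K a (xs @ ys) c \<longleftrightarrow> (\<exists>b. is_chain K a xs b \<and> is_chain K b ys c)"
  by (induction xs arbitrary: a) auto

lemma peq_imp_eq_if_no_Eqs:
  assumes "Eqs K = {}" "funs_typed K"
  shows "peq K p q \<Longrightarrow> p = q \<and> is_path K p"
proof (induction rule: peq.induct)
  case (peq_right a fs b a' gs b' f)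
  then show ?case
    using assms by (auto simp: funs_typed_def is_path_def psrc_def ptgt_def is_chain_append)
qed (use assms in \<open>auto simp: funs_typed_def is_path_def psrc_def ptgt_def\<close>)

lemma pclass_eq_singleton_if_no_Eqs:
  assumes "Eqs K = {}" "funs_typed K" "is_path K p"
  shows "pclass K p = {p}"
  using peq_imp_eq_if_no_Eqs[OF assms(1,2)] peq_refl[OF assms(3)] unfolding pclass_def by blast

lemma funs_typed_collage: "wf_profpres C D P \<Longrightarrow> funs_typed (collage C D P)"
  by (auto simp: funs_typed_def wf_profpres_def wf_catpres_def collage_def)

lemma is_chain_collage_embL:
  "is_chain C a fs b \<Longrightarrow> is_chain (collage C D P) (Inl a) (map Inl fs) (Inl b)"
  by (induction fs arbitrary: a) (auto simp: collage_def)

lemma is_chain_collage_embR: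
  "is_chain D a fs b \<Longrightarrow> is_chain (collage C D P) (Inr a) (map (Inr \<circ> Inr) fs) (Inr b)"
  by (induction fs arbitrary: a) (auto simp: collage_def)

lemma is_path_pcomp_embL:
  assumes "is_path C u" "is_path (collage C D P) p" "psrc p = Inl (ptgt u)"
  shows "is_path (collage C D P) (pcomp (embL u) p)"
  using assms is_chain_collage_embL[of C "psrc u" "fst (snd u)" "ptgt u" D P]
  by (auto simp: is_path_def pcomp_def embL_def psrc_def ptgt_def is_chain_append collage_def)

lemma is_path_pcomp_embR:
  assumes "is_path D v" "is_path (collage C D P) p" "ptgt p = Inr (psrc v)"
  shows "is_path (collage C D P) (pcomp p (embR v))"
  using assms is_chain_collage_embR[of D "psrc v" "fst (snd v)" "ptgt v" C P]
  by (auto simp: is_path_def pcomp_def embR_def psrc_def ptgt_def is_chain_append collage_def)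

lemma plen_pcomp_embL: "plen (pcomp (embL u) p) = plen u + plen p"
  by (simp add: plen_def pcomp_def embL_def)

lemma plen_pcomp_embR: "plen (pcomp p (embR v)) = plen p + plen v"
  by (simp add: plen_def pcomp_def embR_def)

definition coend_lengths :: "('s,'f) celem \<times> ('s,'f) celem \<Rightarrow> nat set" where
  "coend_lengths z = {plen p + plen q | p q. p \<in> fst z \<and> q \<in> snd z}"

lemma coend_lengths_singleton: "coend_lengths ({p}, {q}) = {plen p + plen q}"
  unfolding coend_lengths_def fst_conv snd_conv by blast

locale free_composite =
  fixes C D E :: "('s,'f) catpres" and P Q :: "('s,'f) profpres"
  assumes wf_P: "wf_profpres C D P" and wf_Q: "wf_profpres D E Q"
    and no_Eqs_P: "Eqs (collage C D P) = {}" and no_Eqs_Q: "Eqs (collage D E Q) = {}"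
begin

lemma sem_hom_P_singleton:
  assumes "X \<in> sem_hom C D P c d"
  obtains p where "X = {p}" "is_path (collage C D P) p" "psrc p = Inl c" "ptgt p = Inr d"
  using assms pclass_eq_singleton_if_no_Eqs[OF no_Eqs_P funs_typed_collage[OF wf_P]]
  unfolding sem_hom_def by auto

lemma sem_hom_Q_singleton:
  assumes "Y \<in> sem_hom D E Q d e"
  obtains q where "Y = {q}" "is_path (collage D E Q) q" "psrc q = Inl d" "ptgt q = Inr e"
  using assms pclass_eq_singleton_if_no_Eqs[OF no_Eqs_Q funs_typed_collage[OF wf_Q]]
  unfolding sem_hom_def by auto

lemma comp_gen_preserves_coend_lengths:
  assumes "(z, z') \<in> comp_gen C D E P Q"
  shows "coend_lengths z = coend_lengths z'"
proof -
  from assms obtain X Y g c e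
    where z: "z = (X, sem_lact D E Q g Y)" "z' = (sem_ract C D P g X, Y)"
      and g: "is_path D g"
      and X: "X \<in> sem_hom C D P c (psrc g)" and Y: "Y \<in> sem_hom D E Q (ptgt g) e"
    by (auto simp: comp_gen_def)
  obtain p where p: "X = {p}" "is_path (collage C D P) p" "ptgt p = Inr (psrc g)"
    using sem_hom_P_singleton[OF X] by metis
  obtain q where q: "Y = {q}" "is_path (collage D E Q) q" "psrc q = Inl (ptgt g)"
    using sem_hom_Q_singleton[OF Y] by metis
  have "sem_lact D E Q g Y = {pcomp (embL g) q}"
    using pclass_eq_singleton_if_no_Eqs[OF no_Eqs_Q funs_typed_collage[OF wf_Q]
        is_path_pcomp_embL[OF g q(2,3)]]
    by (simp add: sem_lact_def q(1))
  moreover have "sem_ract C D P g X = {pcomp p (embR g)}"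
    using pclass_eq_singleton_if_no_Eqs[OF no_Eqs_P funs_typed_collage[OF wf_P]
        is_path_pcomp_embR[OF g p(2,3)]]
    by (simp add: sem_ract_def p(1))
  ultimately show ?thesis
    by (simp add: z p(1) q(1) coend_lengths_singleton plen_pcomp_embL plen_pcomp_embR)
qed

lemma comp_eq_preserves_coend_lengths:
  assumes "(z, z') \<in> comp_eq C D E P Q"
  shows "coend_lengths z = coend_lengths z'"
proof -
  have "coend_lengths z = coend_lengths z'"
    if "(z, z') \<in> (comp_gen C D E P Q \<union> (comp_gen C D E P Q)\<inverse>)\<^sup>+"
    using that by induction (auto dest: comp_gen_preserves_coend_lengths)
  then show ?thesis
    using assms unfolding comp_eq_def by blast
qed

end

lemma cross_chain_is_generator:
  assumes "Funs C = {}" "Funs E = {}" "is_chain (collage C E R) (Inl a) fs (Inr b)"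
  shows "\<exists>x\<in>PFuns R. fs = [Inr (Inl x)]"
proof (cases fs)
  case (Cons f fs')
  with assms obtain x where x: "x \<in> PFuns R" "f = Inr (Inl x)"
    by (auto simp: collage_def)
  have "fs' = []"
    using assms Cons x by (cases fs') (auto simp: collage_def)
  then show ?thesis
    using x Cons by auto
qed (use assms in simp)

lemma finite_sem_hom_if_no_Funs:
  assumes "Funs C = {}" "Funs E = {}" "finite (PFuns R)"
  shows "finite (sem_hom C E R c e)"
proof -
  have "{p. is_path (collage C E R) p \<and> psrc p = Inl c \<and> ptgt p = Inr e}
        \<subseteq> (\<lambda>x. (Inl c, [Inr (Inl x)], Inr e)) ` PFuns R"
  proof
    fix p
    assume "p \<in> {p. is_path (collage C E R) p \<and> psrc p = Inl c \<and> ptgt p = Inr e}"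
    then have "is_chain (collage C E R) (Inl c) (fst (snd p)) (Inr e)"
      and "psrc p = Inl c" "ptgt p = Inr e"
      by (auto simp: is_path_def)
    with cross_chain_is_generator[OF assms(1,2)] show "p \<in> (\<lambda>x. (Inl c, [Inr (Inl x)], Inr e)) ` PFuns R"
      by (cases p) (force simp: psrc_def ptgt_def)
  qed
  then show ?thesis
    unfolding sem_hom_def using assms(3) by (meson finite_imageI finite_subset)
qed

lemma not_fin_unc_presentable_if_infinite_hom:
  assumes "Funs C = {}" "Funs E = {}" "c \<in> Sorts C" "e \<in> Sorts E" "infinite (F c e)"
  shows "\<not> fin_unc_presentable C E F act"
proof
  assume "fin_unc_presentable C E F act"
  then obtain R \<phi> where "finite (PFuns R)" "bij_betw \<phi> (F c e) (sem_hom C E R c e)"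
    using assms(3,4) unfolding fin_unc_presentable_def finite_profpres_def prof_iso_sem_def
    by blast
  then show False
    using finite_sem_hom_if_no_Funs[OF assms(1,2)] assms(5) bij_betw_finite by blast
qed

definition point :: "(nat,nat) catpres" where
  "point = \<lparr>Sorts = {0}, Funs = {}, Dom = \<lambda>_. 0, Cod = \<lambda>_. 0, Eqs = {}\<rparr>"

definition loop :: "(nat,nat) catpres" where
  "loop = \<lparr>Sorts = {0}, Funs = {0}, Dom = \<lambda>_. 0, Cod = \<lambda>_. 0, Eqs = {}\<rparr>"

definition single_generator :: "(nat,nat) profpres" where
  "single_generator = \<lparr>PFuns = {0}, PDom = \<lambda>_. 0, PCod = \<lambda>_. 0, PEqs = {}\<rparr>"

lemma wf_single_generator:
  "wf_profpres point loop single_generator" "wf_profpres loop point single_generator"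
  by (auto simp: wf_profpres_def wf_catpres_def point_def loop_def single_generator_def)

lemma finite_single_generator:
  "finite_profpres point loop single_generator" "finite_profpres loop point single_generator"
  by (auto simp: finite_profpres_def finite_catpres_def point_def loop_def single_generator_def)

interpretation point_loop: free_composite point loop point single_generator single_generator
  by unfold_locales
    (rule wf_single_generator, rule wf_single_generator,
     auto simp: collage_def point_def loop_def single_generator_def)

definition generator_path :: "(nat+nat, nat+nat+nat) path" where
  "generator_path = (Inl 0, [Inr (Inl 0)], Inr 0)"

definition loop_generator_path :: "nat \<Rightarrow> (nat+nat, nat+nat+nat) path" where
  "loop_generator_path n = (Inl 0, replicate n (Inl 0) @ [Inr (Inl 0)], Inr 0)"

lemma is_path_generator_path: "is_path (collage point loop single_generator) generator_path"
  by (simp add: generator_path_def is_path_def psrc_def ptgt_def collage_def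
      point_def loop_def single_generator_def)

lemma is_path_loop_generator_path:
  "is_path (collage loop point single_generator) (loop_generator_path n)"
proof -
  have "is_chain (collage loop point single_generator) (Inl 0) (replicate n (Inl 0)) (Inl 0)"
    by (induction n) (auto simp: collage_def loop_def)
  moreover have "is_chain (collage loop point single_generator) (Inl 0) [Inr (Inl 0)] (Inr 0)"
    by (simp add: collage_def point_def single_generator_def)
  ultimately show ?thesis
    by (auto simp: loop_generator_path_def is_path_def psrc_def ptgt_def is_chain_append
        collage_def point_def loop_def)
qed

lemma generator_path_in_sem_hom:
  "{generator_path} \<in> sem_hom point loop single_generator 0 0"
  unfolding sem_hom_def
proof (rule image_eqI)
  show "{generator_path} = pclass (collage point loop single_generator) generator_path"
    using pclass_eq_singleton_if_no_Eqs[OF point_loop.no_Eqs_P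
        funs_typed_collage[OF point_loop.wf_P] is_path_generator_path] by simp
qed (use is_path_generator_path in \<open>simp add: generator_path_def psrc_def ptgt_def\<close>)

lemma loop_generator_path_in_sem_hom:
  "{loop_generator_path n} \<in> sem_hom loop point single_generator 0 0"
  unfolding sem_hom_def
proof (rule image_eqI)
  show "{loop_generator_path n} = pclass (collage loop point single_generator) (loop_generator_path n)"
    using pclass_eq_singleton_if_no_Eqs[OF point_loop.no_Eqs_Q
        funs_typed_collage[OF point_loop.wf_Q] is_path_loop_generator_path] by simp
qed (use is_path_loop_generator_path in \<open>simp add: loop_generator_path_def psrc_def ptgt_def\<close>)

lemma generator_pair_in_comp_carrier:
  "({generator_path}, {loop_generator_path n})
     \<in> comp_carrier point loop point single_generator single_generator 0 0"
  using generator_path_in_sem_hom loop_generator_path_in_sem_hom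
  unfolding comp_carrier_def by (auto simp: loop_def)

lemma infinite_comp_hom_point_loop:
  "infinite (comp_hom point loop point single_generator single_generator 0 0)"
proof -
  let ?z = "\<lambda>n. ({generator_path}, {loop_generator_path n})"
  let ?cls = "\<lambda>n. comp_eq point loop point single_generator single_generator `` {?z n}"
  have self: "?z n \<in> ?cls n" for n
    using generator_pair_in_comp_carrier[of n]
    by (auto simp: comp_eq_def comp_all_def point_def)
  have "inj ?cls"
  proof (rule injI)
    fix m n
    assume "?cls m = ?cls n"
    then have "(?z n, ?z m) \<in> comp_eq point loop point single_generator single_generator"
      using self[of m] by blast
    then have "coend_lengths (?z n) = coend_lengths (?z m)"
      by (rule point_loop.comp_eq_preserves_coend_lengths)
    then show "m = n"
      by (simp add: coend_lengths_singleton plen_def generator_path_def loop_generator_path_def)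
  qed
  then have "infinite (range ?cls)"
    using finite_imageD infinite_UNIV_nat by blast
  moreover have "range ?cls \<subseteq> comp_hom point loop point single_generator single_generator 0 0"
    using generator_pair_in_comp_carrier by (auto simp: comp_hom_def)
  ultimately show ?thesis
    using finite_subset by blast
qed

theorem mainTheorem5:
  shows "\<exists>(C :: (nat, nat) catpres) (D :: (nat, nat) catpres) (E :: (nat, nat) catpres)
            (P :: (nat, nat) profpres) (Q :: (nat, nat) profpres).
           wf_profpres C D P \<and> finite_profpres C D P \<and>
           wf_profpres D E Q \<and> finite_profpres D E Q \<and>
           \<not> fin_unc_presentable C E (comp_hom C D E P Q) (comp_act C D E P Q)"
proof (intro exI conjI)
  show "wf_profpres point loop single_generator" "wf_profpres loop point single_generator"
    by (fact wf_single_generator)+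
  show "finite_profpres point loop single_generator" "finite_profpres loop point single_generator"
    by (fact finite_single_generator)+
  show "\<not> fin_unc_presentable point point
          (comp_hom point loop point single_generator single_generator)
          (comp_act point loop point single_generator single_generator)"
    using infinite_comp_hom_point_loop
    by (rule not_fin_unc_presentable_if_infinite_hom[rotated 4]) (simp_all add: point_def)
qed

end
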